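(* Let $(M,g,S)$, $p$, $u$, $\varphi$, $\beta_2$ and $e_1,e_2$ be as in the context. Give each $v\in\beta_2$ coordinates $(x,y)$ by $v=xe_1+ye_2$. For $a\in\mathbb R$, the circle $k_2=\{v\in\beta_2:\tilde g(v,v)=a\}$ has the equation $$\frac{2\cos\varphi+1}{1+\cos\varphi}\,x^2+\frac{2\cos\varphi-1}{1-\cos\varphi}\,y^2=a.$$
   Context: $M$ is a 4-dimensional differentiable manifold with a positive definite metric $g$ and a tensor field $S$ of type $(1,1)$ whose components in some local coordinate system form the matrix with rows $(0,1,0,0)$, $(0,0,1,0)$, $(0,0,0,1)$, $(-1,0,0,0)$; hence $S^4=-\mathrm{id}$, and $g(Su,Sv)=g(u,v)$ for all vector fields $u,v$. The associated metric is $\tilde g(u,v)=g(u,Sv)+g(Su,v)$. Here $p\in M$, $u\in T_pM$ is a $g$-unit vector such that $\{u,Su,S^2u,S^3u\}$ is a basis of $T_pM$, $\varphi=\angle(u,Su)$ with respect to $g$ (so $\cos\varphi=g(u,Su)$; known: $\frac{\pi}{4}<\varphi<\frac{3\pi}{4}$), $\beta_2=\mathrm{span}\{u,Su\}$, and $e_1=\frac{1}{\sqrt{2(1+\cos\varphi)}}(u+Su)$, $e_2=\frac{1}{\sqrt{2(1-\cos\varphi)}}(-u+Su)$ (a $g$-orthonormal basis of $\beta_2$). *)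

theory Defs
  imports "HOL-Analysis.Analysis"
begin

text \<open>Pointwise model: T_pM is identified with real^4 via the local coordinate
  system; the indices 1,2,3,4 of type 4 are the four coordinates.\<close>

definition Smat :: "real^4^4" where
  "Smat = (\<chi> i j. if (i = 1 \<and> j = 2) \<or> (i = 2 \<and> j = 3) \<or> (i = 3 \<and> j = 4) then 1
                  else if i = 4 \<and> j = 1 then -1 else 0)"

definition Sop :: "real^4 \<Rightarrow> real^4" where
  "Sop x = Smat *v x"

definition gmet :: "real^4^4 \<Rightarrow> real^4 \<Rightarrow> real^4 \<Rightarrow> real" where
  "gmet G x y = x \<bullet> (G *v y)"

definition gtil :: "real^4^4 \<Rightarrow> real^4 \<Rightarrow> real^4 \<Rightarrow> real" where
  "gtil G x y = gmet G x (Sop y) + gmet G (Sop x) y"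

end

theory Submission
  imports Defs
begin

(* Since S^4 = -id and S is a g-isometry, g(u, S^2 u) = g(S^2 u, S^4 u) = -g(u, S^2 u) vanishes,
   so in the basis u, Su of beta_2 the associated metric is the quadratic form
   g~(alpha u + beta Su) = 2 (c (alpha^2 + beta^2) + alpha beta) with c = cos phi.
   The unit bisectors e1, e2 of u and Su are its principal axes: substituting
   alpha = x/A - y/B and beta = x/A + y/B, with A = sqrt (2 (1 + c)) and B = sqrt (2 (1 - c)),
   gives the stated diagonal equation. *)

lemma Sop_add [simp]: "Sop (x + y) = Sop x + Sop y"
  by (simp add: Sop_def matrix_vector_right_distrib)

lemma Sop_scaleR [simp]: "Sop (c *\<^sub>R x) = c *\<^sub>R Sop x"
  by (simp add: Sop_def matrix_vector_mult_scaleR)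

lemma Sop_pow_4: "Sop (Sop (Sop (Sop x))) = - x"
  by (simp add: Sop_def Smat_def matrix_vector_mult_def vec_eq_iff forall_4 sum_4)

lemma gmet_add_left [simp]: "gmet G (x + y) z = gmet G x z + gmet G y z"
  by (simp add: gmet_def inner_add_left)

lemma gmet_add_right [simp]: "gmet G z (x + y) = gmet G z x + gmet G z y"
  by (simp add: gmet_def inner_add_right matrix_vector_right_distrib)

lemma gmet_scaleR_left [simp]: "gmet G (c *\<^sub>R x) z = c * gmet G x z"
  by (simp add: gmet_def)

lemma gmet_scaleR_right [simp]: "gmet G z (c *\<^sub>R x) = c * gmet G z x"
  by (simp add: gmet_def matrix_vector_mult_scaleR)

lemma gmet_minus_right [simp]: "gmet G z (- x) = - gmet G z x"
  using gmet_scaleR_right[of G z "-1" x] by simp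

lemma gmet_commute: "transpose G = G \<Longrightarrow> gmet G x y = gmet G y x"
  unfolding gmet_def by (metis dot_lmul_matrix inner_commute vector_transpose_matrix)

lemma gmet_Sop_Sop_orthogonal:
  assumes "transpose G = G" and "\<And>x y. gmet G (Sop x) (Sop y) = gmet G x y"
  shows "gmet G x (Sop (Sop x)) = 0"
proof -
  have "gmet G x (Sop (Sop x)) = gmet G (Sop (Sop x)) (Sop (Sop (Sop (Sop x))))"
    by (simp add: assms(2))
  also have "\<dots> = - gmet G x (Sop (Sop x))"
    by (simp add: Sop_pow_4 gmet_commute[OF assms(1)])
  finally show ?thesis by simp
qed

lemma gtil_span_pair:
  assumes G_sym: "transpose G = G" and S_isom: "\<And>x y. gmet G (Sop x) (Sop y) = gmet G x y"
    and u_unit: "gmet G u u = 1"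
  shows "gtil G (\<alpha> *\<^sub>R u + \<beta> *\<^sub>R Sop u) (\<alpha> *\<^sub>R u + \<beta> *\<^sub>R Sop u)
           = 2 * (gmet G u (Sop u) * (\<alpha>\<^sup>2 + \<beta>\<^sup>2) + \<alpha> * \<beta>)"
proof -
  have "gmet G (Sop u) (Sop u) = 1" "gmet G (Sop u) (Sop (Sop u)) = gmet G u (Sop u)"
    using S_isom u_unit by simp_all
  moreover have "gmet G u (Sop (Sop u)) = 0"
    using G_sym S_isom by (rule gmet_Sop_Sop_orthogonal)
  ultimately show ?thesis
    unfolding gtil_def
    by (simp add: u_unit gmet_commute[OF G_sym, of "Sop u" u] gmet_commute[OF G_sym, of "Sop (Sop u)"]
        power2_eq_square algebra_simps)
qed

lemma span_pair: "span {p, q} = {a *\<^sub>R p + b *\<^sub>R q | a b. True}"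
proof -
  have "span {p, q} = {x + y | x y. x \<in> span {p} \<and> y \<in> span {q}}"
    using span_Un[of "{p}" "{q}"] by (simp add: insert_commute)
  then show ?thesis
    by (auto simp: span_singleton)
qed

lemma span_bisectors:
  assumes "s \<noteq> 0" and "t \<noteq> 0"
  shows "span {s *\<^sub>R (p + q), t *\<^sub>R (- p + q)} = span {p, q}"
proof -
  let ?E = "{s *\<^sub>R (p + q), t *\<^sub>R (- p + q)}"
  have "(1 / (2 * s)) *\<^sub>R (s *\<^sub>R (p + q)) - (1 / (2 * t)) *\<^sub>R (t *\<^sub>R (- p + q)) \<in> span ?E"
    and "(1 / (2 * s)) *\<^sub>R (s *\<^sub>R (p + q)) + (1 / (2 * t)) *\<^sub>R (t *\<^sub>R (- p + q)) \<in> span ?E"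
    by (intro span_diff span_add span_scale span_base; simp)+
  then have "p \<in> span ?E" "q \<in> span ?E"
    using assms by (simp_all add: algebra_simps scaleR_add_left[symmetric])
  moreover have "s *\<^sub>R (p + q) \<in> span {p, q}" "t *\<^sub>R (- p + q) \<in> span {p, q}"
    by (intro span_scale span_add span_neg span_base; simp)+
  ultimately show ?thesis
    unfolding span_eq by auto
qed

lemma bisector_coordinates_quadratic_form:
  fixes c x y :: real
  assumes "-1 < c" and "c < 1"
  defines "A \<equiv> sqrt (2 * (1 + c))" and "B \<equiv> sqrt (2 * (1 - c))"
  shows "2 * (c * ((x / A - y / B)\<^sup>2 + (x / A + y / B)\<^sup>2) + (x / A - y / B) * (x / A + y / B))
           = (2 * c + 1) / (1 + c) * x\<^sup>2 + (2 * c - 1) / (1 - c) * y\<^sup>2"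
proof -
  have "1 + c \<noteq> 0" "1 - c \<noteq> 0"
    using assms by auto
  then have "(2 * c + 1) / (1 + c) * x\<^sup>2 = 2 * (2 * c + 1) * (x / A)\<^sup>2"
    and "(2 * c - 1) / (1 - c) * y\<^sup>2 = 2 * (2 * c - 1) * (y / B)\<^sup>2"
    using assms by (simp_all add: power_divide field_simps)
  then show ?thesis
    by (simp add: power2_eq_square algebra_simps)
qed

theorem theorem5p6:
  fixes G :: "real^4^4" and u :: "real^4" and \<phi> a :: real
  assumes G_sym: "transpose G = G"
    and G_pos: "\<And>x. x \<noteq> 0 \<Longrightarrow> gmet G x x > 0"
    and S_isom: "\<And>x y. gmet G (Sop x) (Sop y) = gmet G x y"
    and u_unit: "gmet G u u = 1"
    and u_indep: "independent {u, Sop u, Sop (Sop u), Sop (Sop (Sop u))}"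
    and u_span: "span {u, Sop u, Sop (Sop u), Sop (Sop (Sop u))} = UNIV"
    and phi_cos: "cos \<phi> = gmet G u (Sop u)"
    and phi_range: "pi / 4 < \<phi>" "\<phi> < 3 * pi / 4"
  defines "e1 \<equiv> (1 / sqrt (2 * (1 + cos \<phi>))) *\<^sub>R (u + Sop u)"
    and "e2 \<equiv> (1 / sqrt (2 * (1 - cos \<phi>))) *\<^sub>R (- u + Sop u)"
  shows "{v \<in> span {u, Sop u}. gtil G v v = a} =
         {x *\<^sub>R e1 + y *\<^sub>R e2 | x y.
            (2 * cos \<phi> + 1) / (1 + cos \<phi>) * x\<^sup>2
          + (2 * cos \<phi> - 1) / (1 - cos \<phi>) * y\<^sup>2 = a}"
proof -
  define A where "A = sqrt (2 * (1 + cos \<phi>))"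
  define B where "B = sqrt (2 * (1 - cos \<phi>))"
  have cos_bounds: "-1 < cos \<phi>" "cos \<phi> < 1"
    using cos_monotone_0_pi[of \<phi> pi] cos_monotone_0_pi[of 0 \<phi>] phi_range by auto
  then have "A \<noteq> 0" "B \<noteq> 0"
    unfolding A_def B_def by auto
  then have "span {u, Sop u} = span {e1, e2}"
    using span_bisectors[of "1 / A" "1 / B" u "Sop u"]
    unfolding e1_def e2_def A_def[symmetric] B_def[symmetric] by simp
  also have "\<dots> = {x *\<^sub>R e1 + y *\<^sub>R e2 | x y. True}"
    by (rule span_pair)
  finally have span_e: "span {u, Sop u} = {x *\<^sub>R e1 + y *\<^sub>R e2 | x y. True}" .
  have "x *\<^sub>R e1 + y *\<^sub>R e2 = (x / A - y / B) *\<^sub>R u + (x / A + y / B) *\<^sub>R Sop u" for x y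
    unfolding e1_def e2_def A_def[symmetric] B_def[symmetric]
    by (simp add: algebra_simps diff_divide_distrib add_divide_distrib)
  then have "gtil G (x *\<^sub>R e1 + y *\<^sub>R e2) (x *\<^sub>R e1 + y *\<^sub>R e2)
      = (2 * cos \<phi> + 1) / (1 + cos \<phi>) * x\<^sup>2 + (2 * cos \<phi> - 1) / (1 - cos \<phi>) * y\<^sup>2" for x y
    using gtil_span_pair[OF G_sym S_isom u_unit] bisector_coordinates_quadratic_form[OF cos_bounds]
    unfolding phi_cos A_def B_def by simp
  then show ?thesis
    unfolding span_e by force
qed

end
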